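(* Let $p$ be a prime with $p\equiv3\pmod 4$. Let $E$ be the group of translations of $\mathbb F_p^2$, let $Q\le{\rm SL}(2,p)$ be a subgroup isomorphic to the quaternion group $Q_8$, and let $g\in Q$ have order $4$. Then $E\rtimes Q$ and $E\rtimes\langle g\rangle$, acting on $\mathbb F_p^2$, are nonisomorphic primitive groups of degree $p^2$ with the same spectrum.
   Context: The spectrum of a permutation group is the set of cycle types of its elements. *)

theory Defs
  imports "HOL-Algebra.Algebra" "HOL-Library.Multiset"
begin

text \<open>F_p is modelled by residues {0..<p}; F_p^2 by pairs of residues.
  A 2x2 matrix ((a,b),(c,d)) is the tuple (a,b,c,d).\<close>

type_synonym mat2 = "nat \<times> nat \<times> nat \<times> nat"

definition Fp2 :: "nat \<Rightarrow> (nat \<times> nat) set" where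
  "Fp2 p = {0..<p} \<times> {0..<p}"

definition mmul :: "nat \<Rightarrow> mat2 \<Rightarrow> mat2 \<Rightarrow> mat2" where
  "mmul p M N = (case M of (a,b,c,d) \<Rightarrow> case N of (e,f,g,h) \<Rightarrow>
     ((a*e+b*g) mod p, (a*f+b*h) mod p, (c*e+d*g) mod p, (c*f+d*h) mod p))"

definition SL2 :: "nat \<Rightarrow> mat2 set" where
  "SL2 p = {(m1,m2,m3,m4). m1 < p \<and> m2 < p \<and> m3 < p \<and> m4 < p \<and> (m1*m4) mod p = (m2*m3 + 1) mod p}"

definition SL2_group :: "nat \<Rightarrow> mat2 monoid" where
  "SL2_group p = \<lparr>carrier = SL2 p, monoid.mult = mmul p, one = (1,0,0,1)\<rparr>"

definition affine :: "nat \<Rightarrow> mat2 \<Rightarrow> nat \<times> nat \<Rightarrow> (nat \<times> nat \<Rightarrow> nat \<times> nat)" where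
  "affine p M v = (\<lambda>x\<in>Fp2 p. case M of (a,b,c,d) \<Rightarrow> case x of (x1,x2) \<Rightarrow> case v of (v1,v2) \<Rightarrow>
      ((a*x1 + b*x2 + v1) mod p, (c*x1 + d*x2 + v2) mod p))"

text \<open>E \<rtimes> H, acting on F_p^2: all maps x \<mapsto> M x + v with M \<in> H, v a translation.\<close>
definition affine_group :: "nat \<Rightarrow> mat2 set \<Rightarrow> (nat \<times> nat \<Rightarrow> nat \<times> nat) set" where
  "affine_group p H = {affine p M v | M v. M \<in> H \<and> v \<in> Fp2 p}"

definition perm_group :: "'a set \<Rightarrow> ('a \<Rightarrow> 'a) set \<Rightarrow> ('a \<Rightarrow> 'a) monoid" where
  "perm_group V G = (BijGroup V)\<lparr>carrier := G\<rparr>"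

text \<open>Elements (s, u): s = True means a minus sign, u \<in> {0,1,2,3} stands for 1,i,j,k.\<close>
definition qtab :: "(bool \<times> nat) list list" where
  "qtab = [[(False,0),(False,1),(False,2),(False,3)],
           [(False,1),(True,0),(False,3),(True,2)],
           [(False,2),(True,3),(True,0),(False,1)],
           [(False,3),(False,2),(True,1),(True,0)]]"

definition q8mult :: "bool \<times> nat \<Rightarrow> bool \<times> nat \<Rightarrow> bool \<times> nat" where
  "q8mult x y = (case x of (s,a) \<Rightarrow> case y of (t,b) \<Rightarrow>
     (case qtab ! a ! b of (u,c) \<Rightarrow> ((s \<noteq> t) \<noteq> u, c)))"

definition Q8 :: "(bool \<times> nat) monoid" where
  "Q8 = \<lparr>carrier = UNIV \<times> {0..<4}, monoid.mult = q8mult, one = (False,0)\<rparr>"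

definition transitive_on :: "'a set \<Rightarrow> ('a \<Rightarrow> 'a) set \<Rightarrow> bool" where
  "transitive_on V G \<longleftrightarrow> (\<forall>x\<in>V. \<forall>y\<in>V. \<exists>g\<in>G. g x = y)"

definition is_block :: "'a set \<Rightarrow> ('a \<Rightarrow> 'a) set \<Rightarrow> 'a set \<Rightarrow> bool" where
  "is_block V G B \<longleftrightarrow> B \<subseteq> V \<and> B \<noteq> {} \<and> (\<forall>g\<in>G. g ` B = B \<or> g ` B \<inter> B = {})"

definition primitive :: "'a set \<Rightarrow> ('a \<Rightarrow> 'a) set \<Rightarrow> bool" where
  "primitive V G \<longleftrightarrow> transitive_on V G \<and>
     (\<forall>B. is_block V G B \<longrightarrow> card B = 1 \<or> B = V)"

definition cycle_of :: "('a \<Rightarrow> 'a) \<Rightarrow> 'a \<Rightarrow> 'a set" where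
  "cycle_of f x = {(f ^^ n) x | n. True}"

definition cycle_type :: "'a set \<Rightarrow> ('a \<Rightarrow> 'a) \<Rightarrow> nat multiset" where
  "cycle_type V f = image_mset card (mset_set {cycle_of f x | x. x \<in> V})"

definition spectrum_perm :: "'a set \<Rightarrow> ('a \<Rightarrow> 'a) set \<Rightarrow> nat multiset set" where
  "spectrum_perm V G = cycle_type V ` G"

end

theory Submission
  imports Defs "HOL-Number_Theory.Number_Theory"
begin

(*
  Since p \<equiv> 3 (mod 4), -1 is not a
  square mod p, so a matrix M of SL(2,p) with M^2 = -1 has no eigenvector: u and M u span
  F_p^2 for every u \<noteq> 0.  The offsets of a block from one of its points form an additive
  subgroup invariant under M, hence both groups, which contain g with g^2 = -1, are primitive.
  The only involutions of SL(2,p) are \<plusminus>1, so every element of Q is \<plusminus>1 or squares to -1.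
  In the latter case x \<mapsto> M x + v has order 4 and a unique point of period at most 2 (the
  solution of 2 x = (M + 1) v), so it has one fixed point and (p^2 - 1)/4 four-cycles, like
  x \<mapsto> g x.  As \<plusminus>1 \<in> \<langle>g\<rangle>, the spectra agree, while the orders 8 p^2 and 4 p^2 differ.
*)

section \<open>Residue arithmetic\<close>

lemma int_mod_eq_sub_div: "int (x mod p) = int x - int p * int (x div p)"
  by (metis add_diff_cancel_left' div_mult_mod_eq mult.commute of_nat_add of_nat_mult)

lemmas int_residue_simps = of_nat_add of_nat_mult int_mod_eq_sub_div

lemma mod_eq_iff_int_dvd: "x mod p = y mod p \<longleftrightarrow> int p dvd int x - int y"
  by (metis mod_eq_dvd_iff of_nat_eq_iff zmod_int)

lemma residue_eq_iff: "x < p \<Longrightarrow> y < p \<Longrightarrow> x = y \<longleftrightarrow> int p dvd int x - int y"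
  by (metis mod_eq_iff_int_dvd mod_less)

lemma mod_eq_residueI: "y < p \<Longrightarrow> int p dvd int x - int y \<Longrightarrow> x mod p = y"
  by (metis mod_eq_iff_int_dvd mod_less)

lemma residue_eq_minus_one:
  assumes "x < p" "int p dvd int x + 1" shows "x = p - 1"
proof -
  have "int x - int (p - 1) = (int x + 1) - int p" using assms(1) by (simp add: of_nat_diff)
  moreover have "int p dvd (int x + 1) - int p" using assms(2) by (rule dvd_diff) simp
  ultimately have "int p dvd int x - int (p - 1)" by (simp only:)
  then show ?thesis using assms(1) residue_eq_iff[of x p "p - 1"] by simp
qed

lemma mod_eq_minus_one_dvd:
  assumes "p > 0" "x mod p = p - 1" shows "int p dvd int x + 1"
proof -
  have "int p dvd int x - int (p - 1)" using assms mod_eq_iff_int_dvd[of x p "p - 1"] by simp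
  moreover have "int x + 1 = (int x - int (p - 1)) + int p" using assms(1) by simp
  ultimately show ?thesis by (metis dvd_add dvd_refl)
qed

lemma mod_add_mult_mod: "(a * (x mod p) + b * (y mod p)) mod p = (a * x + b * y) mod (p::nat)"
  "((x mod p) * a + (y mod p) * b) mod p = (x * a + y * b) mod p"
  by (metis mod_add_eq mod_mult_right_eq, metis mod_add_eq mod_mult_left_eq)

lemma prime_3_mod_4_gt_2: "Factorial_Ring.prime (p::nat) \<Longrightarrow> p mod 4 = 3 \<Longrightarrow> p > 2"
  using prime_gt_1_nat by (cases "p = 2") auto

lemma minus_one_not_square_mod_prime:
  fixes t :: int
  assumes p: "Factorial_Ring.prime p" "p mod 4 = 3"
  shows "\<not> int p dvd t^2 + 1"
proof
  assume dvd: "int p dvd t^2 + 1"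
  have p2: "2 < p" using prime_3_mod_4_gt_2[OF p] .
  have "QuadRes (int p) (-1)"
    unfolding QuadRes_def using dvd by (auto simp: cong_iff_dvd_diff)
  moreover have "\<not> [-1 = 0] (mod int p)"
    using p2 by (simp add: cong_iff_dvd_diff zdvd_not_zless)
  ultimately have "[1 = (-1) ^ ((p - 1) div 2)] (mod int p)"
    using euler_criterion[of p "-1"] p p2 by (simp add: Legendre_def)
  moreover have "odd ((p - 1) div 2)" using p(2) by presburger
  ultimately have "int p dvd 2" by (simp add: cong_iff_dvd_diff)
  then show False using p2 by (simp add: zdvd_not_zless)
qed

lemma prime_dvd_sum_squares:
  fixes x y :: int
  assumes p: "Factorial_Ring.prime p" "p mod 4 = 3" and dvd: "int p dvd x^2 + y^2"
  shows "int p dvd x \<and> int p dvd y"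
proof -
  have pr: "Factorial_Ring.prime (int p)" using p by simp
  have y: "int p dvd y"
  proof (rule ccontr)
    assume "\<not> int p dvd y"
    then have "coprime y (int p)" using pr prime_imp_coprime coprime_commute by blast
    then obtain z where "[y * z = 1] (mod int p)" using cong_solve_coprime_int by blast
    then have "int p dvd y * z - 1" by (simp add: cong_iff_dvd_diff)
    then have "int p dvd (x * z)^2 + 1" using dvd by Groebner_Basis.algebra
    then show False using minus_one_not_square_mod_prime[OF p] by blast
  qed
  then have "int p dvd x^2" using dvd by (metis dvd_add_left_iff dvd_mult2 power2_eq_square)
  then show ?thesis using y pr by (simp add: power2_eq_square prime_dvd_mult_iff)
qed

section \<open>Finite groups and permutations of period four\<close>

lemma (in group) finite_subgroupI:
  assumes "finite (carrier G)" "H \<subseteq> carrier G" "H \<noteq> {}"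
    and mult: "\<And>x y. x \<in> H \<Longrightarrow> y \<in> H \<Longrightarrow> x \<otimes> y \<in> H"
  shows "subgroup H G"
proof (rule subgroupI)
  fix x assume x: "x \<in> H"
  then have xG: "x \<in> carrier G" using assms(2) by blast
  have pow: "x [^] Suc n \<in> H" for n
    by (induction n) (use x xG assms(2) mult in \<open>auto simp: nat_pow_Suc2\<close>)
  \<comment> \<open>inv x is a positive power of x: use the exponent 2 ord x - 1\<close>
  have "x [^] (ord x * 2) = \<one>"
    using xG by (simp add: nat_pow_pow[symmetric])
  moreover have "ord x * 2 = Suc (Suc (ord x * 2 - 2))"
    using ord_ge_1[OF assms(1) xG] by simp
  ultimately have "x [^] Suc (ord x * 2 - 2) \<otimes> x = \<one>"
    by (metis nat_pow_Suc)
  then have "inv x = x [^] Suc (ord x * 2 - 2)"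
    using xG by (intro inv_equality) simp_all
  then show "inv x \<in> H" using pow by simp
qed (use assms in auto)

lemma finite_Bij: "finite V \<Longrightarrow> finite (Bij V)"
  by (rule finite_subset[of _ "V \<rightarrow>\<^sub>E V"]) (auto simp: Bij_def bij_betw_def extensional_def finite_PiE)

lemma image_mset_mset_set_const:
  assumes "finite A" "\<And>a. a \<in> A \<Longrightarrow> g a = k"
  shows "image_mset g (mset_set A) = replicate_mset (card A) k"
proof -
  have "image_mset g (mset_set A) = image_mset (\<lambda>_. k) (mset_set A)"
    using assms by (intro image_mset_cong) simp
  then show ?thesis by (simp add: image_mset_const_eq)
qed

lemma cycle_of_period4:
  assumes "f (f (f (f x))) = x"
  shows "cycle_of f x = {x, f x, f (f x), f (f (f x))}"
proof
  have "(f ^^ n) x \<in> {x, f x, f (f x), f (f (f x))}" for n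
    by (induction n) (use assms in auto)
  then show "cycle_of f x \<subseteq> {x, f x, f (f x), f (f (f x))}" unfolding cycle_of_def by blast
  have "x = (f ^^ 0) x" "f x = (f ^^ 1) x" "f (f x) = (f ^^ 2) x" "f (f (f x)) = (f ^^ 3) x"
    by (simp_all add: numeral_eq_Suc)
  then show "{x, f x, f (f x), f (f (f x))} \<subseteq> cycle_of f x" unfolding cycle_of_def by blast
qed

context
  fixes V :: "'a set" and f :: "'a \<Rightarrow> 'a"
  assumes maps_to: "\<And>x. x \<in> V \<Longrightarrow> f x \<in> V"
    and period4: "\<And>x. x \<in> V \<Longrightarrow> f (f (f (f x))) = x"
    and involutive_unique: "\<And>x y. x \<in> V \<Longrightarrow> y \<in> V \<Longrightarrow> f (f x) = x \<Longrightarrow> f (f y) = y \<Longrightarrow> x = y"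
begin

lemma cycle_of_period4_on: "x \<in> V \<Longrightarrow> cycle_of f x = {x, f x, f (f x), f (f (f x))}"
  using cycle_of_period4[of f x] period4 by blast

lemma cycle_of_period4_subset: "x \<in> V \<Longrightarrow> cycle_of f x \<subseteq> V"
  using cycle_of_period4_on maps_to by auto

lemma cycle_of_period4_mem_eq:
  assumes "x \<in> V" "z \<in> cycle_of f x" shows "cycle_of f z = cycle_of f x"
proof -
  have "f (f (f (f (f x)))) = f x" "f (f (f (f (f (f x))))) = f (f x)" using period4[OF assms(1)] by simp_all
  then show ?thesis
    using assms period4[OF assms(1)] cycle_of_period4_subset[OF assms(1)]
    by (auto simp: cycle_of_period4_on)
qed

lemma card_cycle_of_period4:
  assumes "x \<in> V" "f x \<noteq> x" shows "card (cycle_of f x) = 4"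
proof -
  have V: "f x \<in> V" "f (f x) \<in> V" using maps_to assms(1) by blast+
  have e: "f (f (f (f x))) = x" using period4[OF assms(1)] .
  \<comment> \<open>if x had period 2, then x and f x would be two distinct involutive points\<close>
  have "f (f x) \<noteq> x" using involutive_unique[OF assms(1) V(1)] assms(2) by metis
  moreover have "f (f (f x)) \<noteq> x" "f x \<noteq> f (f (f x))"  "f (f x) \<noteq> f (f (f x))" "f x \<noteq> f (f x)"
    using assms(2) calculation e by metis+
  ultimately show ?thesis using assms(2) by (simp add: cycle_of_period4_on[OF assms(1)] card_insert_if)
qed

lemma card_cycle_of_period4_cases:
  assumes "x \<in> V" shows "card (cycle_of f x) = 4 \<or> (f x = x \<and> cycle_of f x = {x})"
  using assms card_cycle_of_period4 by (cases "f x = x") (simp_all add: cycle_of_period4_on)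

lemma card_eq_sum_card_cycles:
  assumes "finite V" shows "card V = sum card {cycle_of f x | x. x \<in> V}"
proof -
  have "\<Union> {cycle_of f x | x. x \<in> V} = V"
    using cycle_of_period4_subset cycle_of_period4_on by blast
  moreover have "pairwise disjnt {cycle_of f x | x. x \<in> V}"
    unfolding pairwise_def disjnt_def using cycle_of_period4_mem_eq by blast
  moreover have "finite c" if "c \<in> {cycle_of f x | x. x \<in> V}" for c
    using that assms cycle_of_period4_subset finite_subset by blast
  ultimately show ?thesis using card_Union_disjoint[of "{cycle_of f x | x. x \<in> V}"] by simp
qed

lemma card_singleton_cycles_le_1:
  assumes fin: "finite V" shows "card {c \<in> {cycle_of f x | x. x \<in> V}. card c = 1} \<le> 1"
proof -
  have "{c \<in> {cycle_of f x | x. x \<in> V}. card c = 1} \<subseteq> (\<lambda>x. {x}) ` {x \<in> V. f x = x}"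
  proof
    fix c assume "c \<in> {c \<in> {cycle_of f x | x. x \<in> V}. card c = 1}"
    then obtain x where "x \<in> V" "c = cycle_of f x" "card c = 1" by blast
    then show "c \<in> (\<lambda>x. {x}) ` {x \<in> V. f x = x}" using card_cycle_of_period4_cases by force
  qed
  moreover have "card {x \<in> V. f x = x} \<le> 1"
    using involutive_unique fin by (simp add: card_le_Suc0_iff_eq)
  moreover have "finite {x \<in> V. f x = x}" using fin by simp
  ultimately show ?thesis by (meson card_image_le card_mono finite_imageI le_trans)
qed

lemma cycle_type_period4:
  assumes fin: "finite V" and card: "card V mod 4 = 1"
  shows "cycle_type V f = {#1#} + replicate_mset ((card V - 1) div 4) 4"
proof -
  define C where "C = {cycle_of f x | x. x \<in> V}"
  define C1 where "C1 = {c \<in> C. card c = 1}"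
  define C4 where "C4 = {c \<in> C. card c = 4}"
  have card_cases: "card c = 1 \<or> card c = 4" if "c \<in> C" for c
  proof -
    obtain x where "x \<in> V" "c = cycle_of f x" using \<open>c \<in> C\<close> unfolding C_def by blast
    then show ?thesis using card_cycle_of_period4_cases by fastforce
  qed
  have C_split: "C = C1 \<union> C4" "C1 \<inter> C4 = {}"
    unfolding C1_def C4_def using card_cases by (blast, simp add: disjoint_iff)
  have fin14: "finite C1" "finite C4" using fin unfolding C1_def C4_def C_def by simp_all
  have "card C1 \<le> 1" using card_singleton_cycles_le_1[OF fin] unfolding C1_def C_def .
  have "card V = sum card C1 + sum card C4"
    using card_eq_sum_card_cycles[OF fin] C_split fin14 by (simp add: C_def sum.union_disjoint)
  also have "\<dots> = card C1 + 4 * card C4" by (simp add: C1_def C4_def)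
  finally have "card C1 = 1" "card C4 = (card V - 1) div 4"
    using \<open>card C1 \<le> 1\<close> card by presburger+
  have "cycle_type V f = image_mset card (mset_set C1) + image_mset card (mset_set C4)"
    unfolding cycle_type_def C_def[symmetric] C_split(1) mset_set_Union[OF fin14 C_split(2)] by simp
  also have "image_mset card (mset_set C1) = replicate_mset (card C1) 1"
    by (rule image_mset_mset_set_const) (fact fin14, simp add: C1_def)
  also have "image_mset card (mset_set C4) = replicate_mset (card C4) 4"
    by (rule image_mset_mset_set_const) (fact fin14, simp add: C4_def)
  finally show ?thesis using \<open>card C1 = 1\<close> \<open>card C4 = (card V - 1) div 4\<close> by simp
qed

end

section \<open>The group SL(2,p) and its elements of square -1\<close>

lemma mmul_assoc: "mmul p (mmul p A B) C = mmul p A (mmul p B C)"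
  by (cases A; cases B; cases C)
    (simp only: mmul_def prod.case mod_add_mult_mod, simp add: algebra_simps)

lemma SL2_iff:
  "(a,b,c,d) \<in> SL2 p \<longleftrightarrow>
     a < p \<and> b < p \<and> c < p \<and> d < p \<and> int p dvd int a * int d - int b * int c - 1"
  unfolding SL2_def by (simp add: mod_eq_iff_int_dvd algebra_simps)

lemma mmul_SL2:
  assumes "p > 0" "(a,b,c,d) \<in> SL2 p" "(e,f,g,h) \<in> SL2 p"
  shows "mmul p (a,b,c,d) (e,f,g,h) \<in> SL2 p"
proof -
  have "int p dvd int a * int d - int b * int c - 1" "int p dvd int e * int h - int f * int g - 1"
    using assms by (auto simp: SL2_iff)
  moreover have mod_lt: "x mod p < p" for x using assms(1) by simp
  ultimately show ?thesis
    unfolding mmul_def prod.case SL2_iff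
    by (simp only: int_residue_simps mod_lt simp_thms) Groebner_Basis.algebra
qed

definition madj :: "nat \<Rightarrow> mat2 \<Rightarrow> mat2" where
  "madj p M = (case M of (a,b,c,d) \<Rightarrow> (d, (p - b) mod p, (p - c) mod p, a))"

lemma madj_SL2:
  assumes p: "p > 1" and M: "(a,b,c,d) \<in> SL2 p"
  shows "madj p (a,b,c,d) \<in> SL2 p" "mmul p (madj p (a,b,c,d)) (a,b,c,d) = (1,0,0,1)"
proof -
  have det: "int p dvd int a * int d - int b * int c - 1" and lt: "a < p" "b < p" "c < p" "d < p"
    using M by (auto simp: SL2_iff)
  note neg = of_nat_diff[OF less_imp_le[OF lt(2)]] of_nat_diff[OF less_imp_le[OF lt(3)]]
  have mod_lt: "x mod p < p" for x using p by simp
  show "madj p (a,b,c,d) \<in> SL2 p"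
    unfolding madj_def prod.case SL2_iff using det
    by (simp only: int_residue_simps neg lt mod_lt simp_thms) Groebner_Basis.algebra
  show "mmul p (madj p (a,b,c,d)) (a,b,c,d) = (1,0,0,1)"
    unfolding madj_def mmul_def prod.case prod.inject
    apply (intro conjI mod_eq_residueI; (use p in \<open>simp; fail\<close>)?)
    apply (simp_all only: int_residue_simps neg of_nat_0 of_nat_1)
    subgoal using det by Groebner_Basis.algebra
    subgoal by Groebner_Basis.algebra
    subgoal by Groebner_Basis.algebra
    subgoal using det by Groebner_Basis.algebra
    done
qed

lemma group_SL2_group: "p > 1 \<Longrightarrow> group (SL2_group p)"
proof (rule groupI)
  assume p: "p > 1"
  show "x \<otimes>\<^bsub>SL2_group p\<^esub> y \<in> carrier (SL2_group p)"
    if "x \<in> carrier (SL2_group p)" "y \<in> carrier (SL2_group p)" for x y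
    using that mmul_SL2[of p] p by (cases x; cases y) (auto simp: SL2_group_def)
  show "\<one>\<^bsub>SL2_group p\<^esub> \<in> carrier (SL2_group p)"
    using p by (simp add: SL2_group_def SL2_def)
  show "\<one>\<^bsub>SL2_group p\<^esub> \<otimes>\<^bsub>SL2_group p\<^esub> x = x" if "x \<in> carrier (SL2_group p)" for x
    using that by (cases x) (auto simp: SL2_group_def mmul_def SL2_def)
  show "\<exists>y\<in>carrier (SL2_group p). y \<otimes>\<^bsub>SL2_group p\<^esub> x = \<one>\<^bsub>SL2_group p\<^esub>"
    if "x \<in> carrier (SL2_group p)" for x
    using that madj_SL2[OF p] by (cases x) (simp add: SL2_group_def, blast)
qed (simp add: SL2_group_def mmul_assoc)

abbreviation minus_id :: "nat \<Rightarrow> mat2" where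
  "minus_id p \<equiv> (p - 1, 0, 0, p - 1)"

lemma minus_id_sq: "p > 1 \<Longrightarrow> mmul p (minus_id p) (minus_id p) = (1,0,0,1)"
proof -
  assume p: "p > 1"
  have "int (p - 1) = int p - 1" using p by simp
  then have "int ((p - 1) * (p - 1)) - int 1 = int p * (int p - 2)"
    unfolding of_nat_mult by (simp add: algebra_simps)
  then have "((p - 1) * (p - 1)) mod p = 1"
    using p by (intro mod_eq_residueI) simp_all
  then show ?thesis by (simp add: mmul_def)
qed

lemma SL2_sq_eq_id_scalar:
  assumes p: "Factorial_Ring.prime p" "p > 2" and M: "(a,b,c,d) \<in> SL2 p"
    and sq: "mmul p (a,b,c,d) (a,b,c,d) = (1,0,0,1)"
  shows "b = 0 \<and> c = 0 \<and> a = d"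
proof -
  have pr: "Factorial_Ring.prime (int p)" using p by simp
  have det: "int p dvd int a * int d - int b * int c - 1" and lt: "a < p" "b < p" "c < p" "d < p"
    using M by (auto simp: SL2_iff)
  have "(a * a + b * c) mod p = 1 mod p" "(a * b + b * d) mod p = 0 mod p"
    "(c * a + d * c) mod p = 0 mod p"
    using sq p by (simp_all add: mmul_def)
  then have sq11: "int p dvd int a * int a + int b * int c - 1"
    and "int p dvd int b * (int a + int d)" "int p dvd int c * (int a + int d)"
    by (simp_all only: mod_eq_iff_int_dvd) (simp_all add: algebra_simps)
  moreover have "\<not> int p dvd int a + int d"
  proof
    assume "int p dvd int a + int d"
    then have "int p dvd int a * (int a + int d) - (int a * int d - int b * int c - 1)
        - (int a * int a + int b * int c - 1)"
      using det sq11 by (meson dvd_diff dvd_mult)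
    also have "\<dots> = 2" by (simp add: algebra_simps)
    finally show False using p(2) by (simp add: zdvd_not_zless)
  qed
  ultimately have "int p dvd int b" "int p dvd int c" using pr by (auto simp: prime_dvd_mult_iff)
  then have b: "b = 0" and c: "c = 0" using lt residue_eq_iff[of _ p 0] by auto
  have "int p dvd (int a * int a + int b * int c - 1) - (int a * int d - int b * int c - 1)"
    using sq11 det by (rule dvd_diff)
  then have "int p dvd int a * (int a - int d)" using b by (simp add: algebra_simps)
  moreover have "\<not> int p dvd int a"
  proof
    assume "int p dvd int a"
    then have "int p dvd int a * int d - (int a * int d - int b * int c - 1)"
      using det by (meson dvd_diff dvd_mult2)
    then show False using b p(2) by simp
  qed
  ultimately have "a = d" using pr lt residue_eq_iff[of a p d] by (auto simp: prime_dvd_mult_iff)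
  then show ?thesis using b c by simp
qed

lemma SL2_sq_eq_id:
  assumes p: "Factorial_Ring.prime p" "p > 2" and M: "(a,b,c,d) \<in> SL2 p"
    and sq: "mmul p (a,b,c,d) (a,b,c,d) = (1,0,0,1)"
  shows "(a,b,c,d) = (1,0,0,1) \<or> (a,b,c,d) = minus_id p"
proof -
  have bcd: "b = 0" "c = 0" "d = a" using SL2_sq_eq_id_scalar[OF assms] by simp_all
  have lt: "a < p" using M by (simp add: SL2_iff)
  have "(a * a) mod p = 1 mod p" using sq bcd p by (simp add: mmul_def)
  then have "int p dvd int (a * a) - int 1" by (simp only: mod_eq_iff_int_dvd)
  then have "int p dvd (int a - 1) * (int a + 1)" by (simp add: algebra_simps)
  then consider "int p dvd int a - 1" | "int p dvd int a + 1"
    using p by (auto simp: prime_dvd_mult_iff)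
  then show ?thesis
  proof cases
    case 1
    then have "a = 1" using lt p(2) residue_eq_iff[of a p 1] by simp
    then show ?thesis using bcd by simp
  next
    case 2
    then have "a = p - 1" using lt residue_eq_minus_one by simp
    then show ?thesis using bcd by simp
  qed
qed

lemma mmul_eq_minus_id_congs:
  assumes p: "p > 0" and sq: "mmul p (a,b,c,d) (e,f,g,h) = minus_id p"
  shows "int p dvd int a * int e + int b * int g + 1" "int p dvd int a * int f + int b * int h"
    "int p dvd int c * int e + int d * int g" "int p dvd int c * int f + int d * int h + 1"
proof -
  show "int p dvd int a * int e + int b * int g + 1" "int p dvd int c * int f + int d * int h + 1"
    using mod_eq_minus_one_dvd[OF p, of "a * e + b * g"] mod_eq_minus_one_dvd[OF p, of "c * f + d * h"] sq
    by (simp_all add: mmul_def)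
  show "int p dvd int a * int f + int b * int h" "int p dvd int c * int e + int d * int g"
    using sq by (auto simp: mmul_def mod_eq_0_iff_dvd simp flip: of_nat_mult of_nat_add)
qed

lemma sq_eq_minus_id_trace:
  assumes p: "Factorial_Ring.prime p" "p mod 4 = 3" and sq: "mmul p (a,b,c,d) (a,b,c,d) = minus_id p"
  shows "int p dvd int a + int d"
proof (rule ccontr)
  assume trace: "\<not> int p dvd int a + int d"
  have pr: "Factorial_Ring.prime (int p)" using p by simp
  note congs = mmul_eq_minus_id_congs[OF prime_gt_0_nat[OF p(1)] sq]
  have "int p dvd int b * (int a + int d)" "int p dvd int c * (int a + int d)"
    using congs(2,3) by (simp_all add: algebra_simps)
  then have "int p dvd int b * int c" using trace pr by (simp add: prime_dvd_mult_iff)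
  then have "int p dvd (int a)^2 + 1"
    using congs(1) by (metis add.commute add.left_commute dvd_add_right_iff power2_eq_square)
  then show False using minus_one_not_square_mod_prime[OF p] by blast
qed

lemma sq_eq_minus_id_no_eigenvector:
  fixes u1 u2 :: int
  assumes p: "Factorial_Ring.prime p" "p mod 4 = 3" and sq: "mmul p (a,b,c,d) (a,b,c,d) = minus_id p"
    and det: "int p dvd u1 * (int c * u1 + int d * u2) - u2 * (int a * u1 + int b * u2)"
  shows "int p dvd u1 \<and> int p dvd u2"
proof -
  have pr: "Factorial_Ring.prime (int p)" using p by simp
  have sq11: "int p dvd int a * int a + int b * int c + 1"
    using mmul_eq_minus_id_congs(1)[OF prime_gt_0_nat[OF p(1)] sq] .
  have trace: "int p dvd int a + int d" using sq_eq_minus_id_trace[OF p sq] .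
  \<comment> \<open>completing the square in the binary quadratic form det(u, Mu), of discriminant -4\<close>
  have "(int c * u1 - int a * u2)^2 + u2^2
      = int c * (u1 * (int c * u1 + int d * u2) - u2 * (int a * u1 + int b * u2))
        - int c * u1 * u2 * (int a + int d) + (int a * int a + int b * int c + 1) * u2^2"
    by (simp add: algebra_simps power2_eq_square)
  also have "int p dvd \<dots>" using sq11 trace det by (simp add: dvd_diff dvd_add)
  finally have "int p dvd int c * u1 - int a * u2" "int p dvd u2"
    using prime_dvd_sum_squares[OF p] by blast+
  then have cu1: "int p dvd int c * u1" by (metis dvd_add dvd_mult diff_add_cancel)
  have "\<not> int p dvd int c"
  proof
    assume "int p dvd int c"
    then have "int p dvd (int a * int a + int b * int c + 1) - int b * int c"
      using sq11 by (meson dvd_diff dvd_mult)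
    then have "int p dvd (int a)^2 + 1" by (simp add: power2_eq_square)
    then show False using minus_one_not_square_mod_prime[OF p] by blast
  qed
  then show ?thesis using cu1 \<open>int p dvd u2\<close> pr by (simp add: prime_dvd_mult_iff)
qed

section \<open>Affine groups\<close>

lemma Fp2_iff: "(x1,x2) \<in> Fp2 p \<longleftrightarrow> x1 < p \<and> x2 < p"
  by (simp add: Fp2_def)

lemma finite_Fp2: "finite (Fp2 p)"
  by (simp add: Fp2_def)

lemma card_Fp2: "card (Fp2 p) = p^2"
  by (simp add: Fp2_def power2_eq_square)

lemma affine_in_Fp2: "p > 0 \<Longrightarrow> x \<in> Fp2 p \<Longrightarrow> affine p M v x \<in> Fp2 p"
  by (cases M; cases v; cases x) (simp add: affine_def Fp2_def)

lemma affine_apply: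
  "(x1,x2) \<in> Fp2 p \<Longrightarrow>
     affine p (a,b,c,d) (v1,v2) (x1,x2) = ((a*x1 + b*x2 + v1) mod p, (c*x1 + d*x2 + v2) mod p)"
  by (simp add: affine_def)

lemma affine_origin: "p > 0 \<Longrightarrow> affine p M (0,0) (0,0) = (0,0)"
  by (cases M) (simp add: affine_apply Fp2_def)

lemma affine_congs:
  assumes "(x1,x2) \<in> Fp2 p" "affine p (a,b,c,d) (v1,v2) (x1,x2) = (y1,y2)"
  shows "int p dvd int y1 - (int a * int x1 + int b * int x2 + int v1)"
    "int p dvd int y2 - (int c * int x1 + int d * int x2 + int v2)"
proof -
  have mod_congr: "int p dvd int (x mod p) - int x" for x
    by (simp only: int_mod_eq_sub_div) simp
  have "y1 = (a * x1 + b * x2 + v1) mod p" "y2 = (c * x1 + d * x2 + v2) mod p"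
    using assms by (simp_all add: affine_apply)
  then show "int p dvd int y1 - (int a * int x1 + int b * int x2 + int v1)"
    "int p dvd int y2 - (int c * int x1 + int d * int x2 + int v2)"
    using mod_congr[of "a * x1 + b * x2 + v1"] mod_congr[of "c * x1 + d * x2 + v2"]
    by (simp_all only: of_nat_add of_nat_mult)
qed

lemma affine_affine:
  assumes p: "p > 0" and x: "x \<in> Fp2 p" and w: "w \<in> Fp2 p"
  shows "affine p M v (affine p N w x) = affine p (mmul p M N) (affine p M v w) x"
proof -
  obtain a b c d e f g h where MN: "M = (a,b,c,d)" "N = (e,f,g,h)" by (cases M; cases N) auto
  obtain v1 v2 w1 w2 x1 x2 where vwx: "v = (v1,v2)" "w = (w1,w2)" "x = (x1,x2)"
    by (cases v; cases w; cases x) auto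
  have "x1 < p" "x2 < p" "w1 < p" "w2 < p" using x w vwx by (auto simp: Fp2_def)
  then show ?thesis unfolding MN vwx
    apply (simp add: affine_apply Fp2_iff p mmul_def)
    apply (intro conjI iffD2[OF mod_eq_iff_int_dvd])
    apply (simp_all only: int_residue_simps)
    by Groebner_Basis.algebra+
qed

lemma compose_affine:
  assumes "p > 0" "w \<in> Fp2 p"
  shows "compose (Fp2 p) (affine p M v) (affine p N w) = affine p (mmul p M N) (affine p M v w)"
proof
  fix x show "compose (Fp2 p) (affine p M v) (affine p N w) x = affine p (mmul p M N) (affine p M v w) x"
    by (cases "x \<in> Fp2 p") (simp_all add: compose_def affine_affine[OF assms(1) _ assms(2)],
      simp add: affine_def)
qed

lemma inj_on_affine:
  assumes M: "M \<in> SL2 p"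
  shows "inj_on (affine p M v) (Fp2 p)"
proof (rule inj_onI)
  fix x y assume xy: "x \<in> Fp2 p" "y \<in> Fp2 p" "affine p M v x = affine p M v y"
  obtain a b c d where M': "M = (a,b,c,d)" by (cases M) auto
  obtain v1 v2 x1 x2 y1 y2 where vxy: "v = (v1,v2)" "x = (x1,x2)" "y = (y1,y2)"
    by (cases v; cases x; cases y) auto
  obtain z1 z2 where z: "affine p M v x = (z1,z2)" by fastforce
  have det: "int p dvd int a * int d - int b * int c - 1" using M M' by (simp add: SL2_iff)
  note hx = affine_congs[OF xy(1)[unfolded vxy] z[unfolded M' vxy]]
  have z': "affine p M v y = (z1,z2)" using xy(3) z by simp
  note hy = affine_congs[OF xy(2)[unfolded vxy] z'[unfolded M' vxy]]
  \<comment> \<open>multiply the difference of the two images by the adjugate of M\<close>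
  have "int p dvd int x1 - int y1" using det hx hy by Groebner_Basis.algebra
  moreover have "int p dvd int x2 - int y2" using det hx hy by Groebner_Basis.algebra
  ultimately show "x = y" using xy(1,2) vxy by (auto simp: Fp2_iff residue_eq_iff)
qed

lemma affine_Bij:
  assumes "p > 0" "M \<in> SL2 p" shows "affine p M v \<in> Bij (Fp2 p)"
proof -
  have "affine p M v ` Fp2 p \<subseteq> Fp2 p" using affine_in_Fp2 assms(1) by blast
  then have "bij_betw (affine p M v) (Fp2 p) (Fp2 p)"
    using endo_inj_surj[OF finite_Fp2 _ inj_on_affine] assms(2) inj_on_affine
    by (simp add: bij_betw_def)
  moreover have "affine p M v \<in> extensional (Fp2 p)" by (simp add: affine_def)
  ultimately show ?thesis by (simp add: Bij_def)
qed

lemma affine_groupI: "M \<in> H \<Longrightarrow> v \<in> Fp2 p \<Longrightarrow> affine p M v \<in> affine_group p H"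
  unfolding affine_group_def by blast

lemma affine_groupE:
  "f \<in> affine_group p H \<Longrightarrow> (\<And>M v. f = affine p M v \<Longrightarrow> M \<in> H \<Longrightarrow> v \<in> Fp2 p \<Longrightarrow> P) \<Longrightarrow> P"
  unfolding affine_group_def by blast

lemma affine_group_mono: "H \<subseteq> K \<Longrightarrow> affine_group p H \<subseteq> affine_group p K"
  unfolding affine_group_def by blast

lemma affine_group_subgroup:
  assumes p: "p > 1" and H: "subgroup H (SL2_group p)"
  shows "subgroup (affine_group p H) (BijGroup (Fp2 p))"
proof -
  interpret Bij: group "BijGroup (Fp2 p)" by (rule group_BijGroup)
  have HS: "H \<subseteq> SL2 p" using subgroup.subset[OF H] by (simp add: SL2_group_def)
  show ?thesis
  proof (rule Bij.finite_subgroupI)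
    show "finite (carrier (BijGroup (Fp2 p)))" by (simp add: BijGroup_def finite_Bij finite_Fp2)
    show "affine_group p H \<subseteq> carrier (BijGroup (Fp2 p))"
      using HS affine_Bij p by (auto simp: BijGroup_def elim!: affine_groupE)
    have "(1,0,0,1) \<in> H" using subgroup.one_closed[OF H] by (simp add: SL2_group_def)
    then show "affine_group p H \<noteq> {}" using p affine_groupI[of _ H "(0,0)" p] by (auto simp: Fp2_def)
  next
    fix f g assume "f \<in> affine_group p H" "g \<in> affine_group p H"
    then obtain M v N w where fg: "f = affine p M v" "g = affine p N w"
      and mem: "M \<in> H" "N \<in> H" "v \<in> Fp2 p" "w \<in> Fp2 p"
      by (auto elim!: affine_groupE)
    have "mmul p M N \<in> H" using subgroup.m_closed[OF H mem(1,2)] by (simp add: SL2_group_def)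
    moreover have "f \<in> Bij (Fp2 p)" "g \<in> Bij (Fp2 p)" using fg mem(1,2) HS p by (auto intro: affine_Bij)
    ultimately show "f \<otimes>\<^bsub>BijGroup (Fp2 p)\<^esub> g \<in> affine_group p H"
      using fg mem p by (simp add: BijGroup_def compose_affine affine_groupI affine_in_Fp2)
  qed
qed

lemma affine_eq_affineD:
  assumes p: "p > 1" and M: "M \<in> SL2 p" "M' \<in> SL2 p" and v: "v \<in> Fp2 p" "v' \<in> Fp2 p"
    and eq: "affine p M v = affine p M' v'"
  shows "M = M' \<and> v = v'"
proof -
  obtain a b c d a' b' c' d' where MM': "M = (a,b,c,d)" "M' = (a',b',c',d')"
    by (cases M; cases M') auto
  obtain v1 v2 v1' v2' where vv': "v = (v1,v2)" "v' = (v1',v2')" by (cases v; cases v') auto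
  have lt: "a<p" "b<p" "c<p" "d<p" "a'<p" "b'<p" "c'<p" "d'<p" "v1<p" "v2<p" "v1'<p" "v2'<p"
    using M v MM' vv' by (auto simp: SL2_iff Fp2_def)
  have pts: "(0,0) \<in> Fp2 p" "(1,0) \<in> Fp2 p" "(0,1) \<in> Fp2 p" using p by (auto simp: Fp2_def)
  have "v1 = v1'" "v2 = v2'"
    using fun_cong[OF eq, of "(0,0)"] pts lt MM' vv' by (simp_all add: affine_apply)
  moreover have "a = a'" "c = c'" "b = b'" "d = d'"
    using fun_cong[OF eq, of "(1,0)"] fun_cong[OF eq, of "(0,1)"] pts lt MM' vv' \<open>v1 = v1'\<close> \<open>v2 = v2'\<close>
    by (auto simp: affine_apply mod_eq_iff_int_dvd residue_eq_iff)
  ultimately show ?thesis using MM' vv' by simp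
qed

lemma card_affine_group:
  assumes p: "p > 1" and H: "H \<subseteq> SL2 p"
  shows "card (affine_group p H) = card H * p^2"
proof -
  have "affine_group p H = (\<lambda>(M,v). affine p M v) ` (H \<times> Fp2 p)"
    by (force simp: affine_group_def)
  moreover have "inj_on (\<lambda>(M,v). affine p M v) (H \<times> Fp2 p)"
  proof (rule inj_onI, clarify)
    fix M v M' v' assume "M \<in> H" "v \<in> Fp2 p" "M' \<in> H" "v' \<in> Fp2 p" "affine p M v = affine p M' v'"
    then show "M = M' \<and> v = v'" using H affine_eq_affineD[OF p] by blast
  qed
  ultimately have "card (affine_group p H) = card (H \<times> Fp2 p)" by (simp add: card_image)
  then show ?thesis by (simp add: card_cartesian_product card_Fp2)
qed

section \<open>Primitivity\<close>

definition vadd :: "nat \<Rightarrow> nat \<times> nat \<Rightarrow> nat \<times> nat \<Rightarrow> nat \<times> nat" where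
  "vadd p u w = ((fst u + fst w) mod p, (snd u + snd w) mod p)"

definition vsub :: "nat \<Rightarrow> nat \<times> nat \<Rightarrow> nat \<times> nat \<Rightarrow> nat \<times> nat" where
  "vsub p u w = ((fst u + (p - fst w)) mod p, (snd u + (p - snd w)) mod p)"

definition smul :: "nat \<Rightarrow> nat \<Rightarrow> nat \<times> nat \<Rightarrow> nat \<times> nat" where
  "smul p k u = ((k * fst u) mod p, (k * snd u) mod p)"

lemma vadd_in_Fp2: "p > 0 \<Longrightarrow> vadd p u w \<in> Fp2 p"
  by (simp add: vadd_def Fp2_def)

lemma vsub_in_Fp2: "p > 0 \<Longrightarrow> vsub p u w \<in> Fp2 p"
  by (simp add: vsub_def Fp2_def)

lemma vadd_zero_left: "x \<in> Fp2 p \<Longrightarrow> vadd p (0,0) x = x"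
  by (cases x) (simp add: vadd_def Fp2_def)

lemma vadd_vadd: "vadd p w2 (vadd p w1 x) = vadd p (vadd p w1 w2) x"
  by (simp add: vadd_def mod_simps add.commute add.left_commute)

lemma vadd_vsub:
  assumes "x \<in> Fp2 p" "y \<in> Fp2 p" shows "vadd p (vsub p y x) x = y"
proof -
  have "((b + (p - a)) mod p + a) mod p = b" if "a < p" "b < p" for a b
    using that by (simp add: mod_add_left_eq)
  then show ?thesis using assms by (cases x; cases y) (simp add: vadd_def vsub_def Fp2_def)
qed

lemma smul_Suc: "smul p (Suc k) x = vadd p (smul p k x) x"
  by (simp add: smul_def vadd_def mod_simps add.commute)

lemma smul_mem:
  assumes "(0,0) \<in> S" "\<And>x y. x \<in> S \<Longrightarrow> y \<in> S \<Longrightarrow> vadd p x y \<in> S" "x \<in> S"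
  shows "smul p k x \<in> S"
  by (induction k) (use assms in \<open>simp_all add: smul_Suc, simp add: smul_def\<close>)

lemma affine_translation: "x \<in> Fp2 p \<Longrightarrow> affine p (1,0,0,1) w x = vadd p w x"
  by (cases x; cases w) (simp add: affine_apply vadd_def Fp2_iff add.commute)

lemma affine_centred_at_vadd:
  assumes p: "p > 0" and x: "x \<in> Fp2 p" and w: "w \<in> Fp2 p"
  shows "affine p M (vsub p x (affine p M (0,0) x)) (vadd p w x) = vadd p (affine p M (0,0) w) x"
proof -
  obtain a b c d where M: "M = (a,b,c,d)" by (cases M) auto
  obtain x1 x2 w1 w2 where xw: "x = (x1,x2)" "w = (w1,w2)" by (cases x; cases w) auto
  have lt: "x1 < p" "x2 < p" "w1 < p" "w2 < p" using x w xw by (auto simp: Fp2_def)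
  have le: "(a*x1 + b*x2) mod p \<le> p" "(c*x1 + d*x2) mod p \<le> p"
    using p by (simp_all add: less_imp_le)
  have le': "(a*x1 + b*x2) mod p \<le> x1 + p" "(c*x1 + d*x2) mod p \<le> x2 + p"
    using le by simp_all
  show ?thesis unfolding M xw
    apply (simp add: affine_apply Fp2_iff lt vsub_def vadd_def p)
    apply (intro conjI iffD2[OF mod_eq_iff_int_dvd])
    apply (simp_all only: int_residue_simps of_nat_diff[OF le(1)] of_nat_diff[OF le(2)]
        of_nat_diff[OF le'(1)] of_nat_diff[OF le'(2)])
    by Groebner_Basis.algebra+
qed

lemma Fp2_eq_lincomb:
  assumes p: "Factorial_Ring.prime p" and det: "\<not> int p dvd int u1 * int w2 - int u2 * int w1"
    and y: "y \<in> Fp2 p"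
  shows "\<exists>\<alpha> \<beta>. vadd p (smul p \<alpha> (u1,u2)) (smul p \<beta> (w1,w2)) = y"
proof -
  define P where "P = int p"
  define D where "D = int u1 * int w2 - int u2 * int w1"
  obtain y1 y2 where y': "y = (y1,y2)" by fastforce
  have lt: "y1 < p" "y2 < p" using y y' by (auto simp: Fp2_def)
  have "Factorial_Ring.prime P" using p by (simp add: P_def)
  then have "coprime D P" using det prime_imp_coprime coprime_commute unfolding P_def D_def by blast
  then obtain z where "[D * z = 1] (mod P)" using cong_solve_coprime_int by blast
  then have z: "P dvd D * z - 1" by (simp add: cong_iff_dvd_diff)
  \<comment> \<open>Cramer's rule\<close>
  define A where "A = z * (int y1 * int w2 - int y2 * int w1)"
  define B where "B = z * (int u1 * int y2 - int u2 * int y1)"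
  have P0: "P > 0" using p prime_gt_0_nat P_def by simp
  have A: "int (nat (A mod P)) = A - P * (A div P)" and B: "int (nat (B mod P)) = B - P * (B div P)"
    using P0 by (simp_all add: minus_mult_div_eq_mod)
  have "vadd p (smul p (nat (A mod P)) (u1,u2)) (smul p (nat (B mod P)) (w1,w2)) = y"
    unfolding vadd_def smul_def y' fst_conv snd_conv prod.inject
    apply (intro conjI mod_eq_residueI lt)
    apply (simp_all only: int_residue_simps A B flip: P_def)
    using z unfolding A_def B_def D_def by Groebner_Basis.algebra+
  then show ?thesis by blast
qed

lemma sq_eq_minus_id_det_nonzero:
  assumes p: "Factorial_Ring.prime p" "p mod 4 = 3" and sq: "mmul p M M = minus_id p"
    and u: "(u1,u2) \<in> Fp2 p" "(u1,u2) \<noteq> (0,0)" and w: "affine p M (0,0) (u1,u2) = (w1,w2)"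
  shows "\<not> int p dvd int u1 * int w2 - int u2 * int w1"
proof
  assume det: "int p dvd int u1 * int w2 - int u2 * int w1"
  obtain a b c d where M: "M = (a,b,c,d)" by (cases M) auto
  note w = affine_congs[OF u(1) w[unfolded M], unfolded of_nat_0 add_0_right]
  have "int p dvd int u1 * (int c * int u1 + int d * int u2) - int u2 * (int a * int u1 + int b * int u2)"
    using w det by Groebner_Basis.algebra
  then have "int p dvd int u1" "int p dvd int u2"
    using sq_eq_minus_id_no_eigenvector[OF p sq[unfolded M]] by blast+
  then show False using u residue_eq_iff[of _ p 0] by (auto simp: Fp2_def)
qed

lemma invariant_subgroup_eq_Fp2:
  assumes p: "Factorial_Ring.prime p" "p mod 4 = 3" and sq: "mmul p M M = minus_id p"
    and S: "S \<subseteq> Fp2 p" "(0,0) \<in> S" and add: "\<And>x y. x \<in> S \<Longrightarrow> y \<in> S \<Longrightarrow> vadd p x y \<in> S"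
    and inv: "\<And>x. x \<in> S \<Longrightarrow> affine p M (0,0) x \<in> S" and u: "u \<in> S" "u \<noteq> (0,0)"
  shows "S = Fp2 p"
proof
  show "Fp2 p \<subseteq> S"
  proof
    fix y assume y: "y \<in> Fp2 p"
    obtain u1 u2 w1 w2 where uw: "u = (u1,u2)" "affine p M (0,0) u = (w1,w2)"
      by (cases u; cases "affine p M (0,0) u") auto
    have "(w1,w2) \<in> S" using inv[OF u(1)] uw by simp
    moreover have "\<not> int p dvd int u1 * int w2 - int u2 * int w1"
      using sq_eq_minus_id_det_nonzero[OF p sq] u S(1) uw by auto
    then obtain \<alpha> \<beta> where "vadd p (smul p \<alpha> (u1,u2)) (smul p \<beta> (w1,w2)) = y"
      using Fp2_eq_lincomb[OF p(1) _ y] by blast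
    ultimately show "y \<in> S" using add smul_mem[OF S(2) add] u(1) uw by metis
  qed
qed (use S in blast)

lemma is_block_stable:
  assumes "is_block V G B" "f \<in> G" "z \<in> B" "f z \<in> B" "z' \<in> B"
  shows "f z' \<in> B"
  using assms unfolding is_block_def by blast

lemma transitive_on_affine_group:
  assumes "p > 0" "(1,0,0,1) \<in> H" shows "transitive_on (Fp2 p) (affine_group p H)"
  unfolding transitive_on_def
proof (intro ballI)
  fix x y assume "x \<in> Fp2 p" "y \<in> Fp2 p"
  then have "affine p (1,0,0,1) (vsub p y x) x = y" by (simp only: affine_translation vadd_vsub)
  moreover have "affine p (1,0,0,1) (vsub p y x) \<in> affine_group p H"
    using assms by (simp add: affine_groupI vsub_in_Fp2)
  ultimately show "\<exists>g\<in>affine_group p H. g x = y" by blast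
qed

definition block_offsets :: "nat \<Rightarrow> (nat \<times> nat) set \<Rightarrow> nat \<times> nat \<Rightarrow> (nat \<times> nat) set" where
  "block_offsets p B x = {w \<in> Fp2 p. vadd p w x \<in> B}"

context
  fixes p :: nat and H :: "mat2 set" and B :: "(nat \<times> nat) set" and x :: "nat \<times> nat"
  assumes p0: "p > 0" and B: "is_block (Fp2 p) (affine_group p H) B" and x: "x \<in> B"
begin

lemma block_mem_Fp2: "x \<in> Fp2 p"
  using B x unfolding is_block_def by blast

lemma block_offsets_vadd:
  assumes I: "(1,0,0,1) \<in> H" and w: "w1 \<in> block_offsets p B x" "w2 \<in> block_offsets p B x"
  shows "vadd p w1 w2 \<in> block_offsets p B x"
proof -
  define \<tau> where "\<tau> = affine p (1,0,0,1) w2"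
  have \<tau>G: "\<tau> \<in> affine_group p H" using I w(2) by (simp add: \<tau>_def block_offsets_def affine_groupI)
  have "\<tau> x \<in> B" using w(2) block_mem_Fp2
    by (simp only: \<tau>_def affine_translation) (simp add: block_offsets_def)
  moreover have "vadd p w1 x \<in> B" using w(1) by (simp add: block_offsets_def)
  ultimately have "\<tau> (vadd p w1 x) \<in> B" by (rule is_block_stable[OF B \<tau>G x])
  moreover have "\<tau> (vadd p w1 x) = vadd p (vadd p w1 w2) x"
    by (simp only: \<tau>_def affine_translation[OF vadd_in_Fp2[OF p0]] vadd_vadd)
  ultimately show ?thesis by (simp add: block_offsets_def vadd_in_Fp2 p0)
qed

lemma block_offsets_linear:
  assumes M: "M \<in> H" and w: "w \<in> block_offsets p B x"
  shows "affine p M (0,0) w \<in> block_offsets p B x"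
proof -
  \<comment> \<open>the conjugate of the linear map M by the translation to x fixes x\<close>
  let ?\<sigma> = "affine p M (vsub p x (affine p M (0,0) x))"
  have \<sigma>G: "?\<sigma> \<in> affine_group p H" using M p0 by (simp add: affine_groupI vsub_in_Fp2)
  have "?\<sigma> x = x" using affine_centred_at_vadd[OF p0 block_mem_Fp2, of "(0,0)"] block_mem_Fp2 p0
    by (simp add: affine_origin vadd_zero_left Fp2_iff)
  then have "?\<sigma> x \<in> B" using x by simp
  moreover have "vadd p w x \<in> B" using w by (simp add: block_offsets_def)
  ultimately have "?\<sigma> (vadd p w x) \<in> B" by (rule is_block_stable[OF B \<sigma>G x])
  moreover have "w \<in> Fp2 p" using w by (simp add: block_offsets_def)
  ultimately show ?thesis
    using affine_centred_at_vadd[OF p0 block_mem_Fp2] affine_in_Fp2[OF p0] by (simp add: block_offsets_def)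
qed

lemma block_eq_Fp2:
  assumes p: "Factorial_Ring.prime p" "p mod 4 = 3"
    and H: "(1,0,0,1) \<in> H" "M \<in> H" and sq: "mmul p M M = minus_id p"
    and y: "y \<in> B" "y \<noteq> x"
  shows "B = Fp2 p"
proof -
  have yV: "y \<in> Fp2 p" using B y unfolding is_block_def by blast
  have "block_offsets p B x = Fp2 p"
  proof (rule invariant_subgroup_eq_Fp2[OF p sq])
    show "block_offsets p B x \<subseteq> Fp2 p" unfolding block_offsets_def by blast
    show "(0,0) \<in> block_offsets p B x"
      using x block_mem_Fp2 p0 by (simp add: block_offsets_def vadd_zero_left Fp2_def)
    show "vsub p y x \<in> block_offsets p B x"
      using vsub_in_Fp2[OF p0] vadd_vsub[OF block_mem_Fp2 yV] y by (simp add: block_offsets_def)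
    show "vsub p y x \<noteq> (0,0)" using vadd_vsub[OF block_mem_Fp2 yV] vadd_zero_left[OF block_mem_Fp2] y by force
  qed (use block_offsets_vadd[OF H(1)] block_offsets_linear[OF H(2)] in auto)
  then have "vadd p (vsub p z x) x \<in> B" if "z \<in> Fp2 p" for z
    using that vsub_in_Fp2[OF p0] unfolding block_offsets_def by blast
  then show "B = Fp2 p" using B vadd_vsub[OF block_mem_Fp2] unfolding is_block_def by auto
qed

end

lemma primitive_affine_group:
  assumes p: "Factorial_Ring.prime p" "p mod 4 = 3"
    and H: "(1,0,0,1) \<in> H" "M \<in> H" and sq: "mmul p M M = minus_id p"
  shows "primitive (Fp2 p) (affine_group p H)"
  unfolding primitive_def
proof (intro conjI allI impI)
  have p0: "p > 0" using p prime_gt_0_nat by blast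
  show "transitive_on (Fp2 p) (affine_group p H)" using transitive_on_affine_group[OF p0 H(1)] .
  fix B assume B: "is_block (Fp2 p) (affine_group p H) B"
  show "card B = 1 \<or> B = Fp2 p"
  proof (cases "card B = 1")
    case False
    moreover obtain x where x: "x \<in> B" using B unfolding is_block_def by blast
    ultimately have "B \<noteq> {x}" by auto
    then obtain y where "y \<in> B" "y \<noteq> x" using x by blast
    then show ?thesis using block_eq_Fp2[OF p0 B x p H sq] by blast
  qed simp
qed

section \<open>Cycle types of affine maps with linear part of square -1\<close>

context
  fixes p a b c d v1 v2 :: nat
  assumes p: "Factorial_Ring.prime p" "p mod 4 = 3"
    and sq: "mmul p (a,b,c,d) (a,b,c,d) = minus_id p"
begin

lemma affine_sq_minus_id_twice:
  assumes x: "(x1,x2) \<in> Fp2 p" and z: "affine p (a,b,c,d) (v1,v2) (affine p (a,b,c,d) (v1,v2) (x1,x2)) = (z1,z2)"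
  shows "int p dvd int z1 + int x1 - (int a * int v1 + int b * int v2 + int v1)"
    "int p dvd int z2 + int x2 - (int c * int v1 + int d * int v2 + int v2)"
proof -
  have p0: "p > 0" using p prime_gt_0_nat by blast
  obtain y1 y2 where y: "affine p (a,b,c,d) (v1,v2) (x1,x2) = (y1,y2)" by fastforce
  have "(y1,y2) \<in> Fp2 p" using affine_in_Fp2[OF p0 x, of "(a,b,c,d)" "(v1,v2)"] y by simp
  note hy = affine_congs[OF x y] and hz = affine_congs[OF this z[unfolded y]]
  note e = mmul_eq_minus_id_congs[OF p0 sq]
  show "int p dvd int z1 + int x1 - (int a * int v1 + int b * int v2 + int v1)"
    using hy hz(1) e(1) e(2) by Groebner_Basis.algebra
  show "int p dvd int z2 + int x2 - (int c * int v1 + int d * int v2 + int v2)"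
    using hy hz(2) e(3) e(4) by Groebner_Basis.algebra
qed

lemma affine_sq_minus_id_period4:
  assumes x: "x \<in> Fp2 p"
  shows "affine p (a,b,c,d) (v1,v2) (affine p (a,b,c,d) (v1,v2)
           (affine p (a,b,c,d) (v1,v2) (affine p (a,b,c,d) (v1,v2) x))) = x"
proof -
  let ?f = "affine p (a,b,c,d) (v1,v2)"
  have p0: "p > 0" using p prime_gt_0_nat by blast
  obtain x1 x2 z1 z2 t1 t2 where xzt: "x = (x1,x2)" "?f (?f x) = (z1,z2)" "?f (?f (z1,z2)) = (t1,t2)"
    by (metis surj_pair)
  have z: "(z1,z2) \<in> Fp2 p" using affine_in_Fp2[OF p0 affine_in_Fp2[OF p0 x]] xzt(2) by metis
  then have t: "(t1,t2) \<in> Fp2 p" using affine_in_Fp2[OF p0 affine_in_Fp2[OF p0 z]] xzt(3) by metis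
  note h1 = affine_sq_minus_id_twice[OF x[unfolded xzt(1)] xzt(2)[unfolded xzt(1)]]
  note h2 = affine_sq_minus_id_twice[OF z xzt(3)]
  have "int p dvd int t1 - int x1" using dvd_diff[OF h2(1) h1(1)] by (simp add: algebra_simps)
  moreover have "int p dvd int t2 - int x2" using dvd_diff[OF h2(2) h1(2)] by (simp add: algebra_simps)
  ultimately have "(t1,t2) = x" using t x xzt(1) by (auto simp: Fp2_iff residue_eq_iff)
  then show ?thesis using xzt by simp
qed

lemma affine_sq_minus_id_involutive_unique:
  assumes x: "x \<in> Fp2 p" and y: "y \<in> Fp2 p"
    and "affine p (a,b,c,d) (v1,v2) (affine p (a,b,c,d) (v1,v2) x) = x"
    and "affine p (a,b,c,d) (v1,v2) (affine p (a,b,c,d) (v1,v2) y) = y"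
  shows "x = y"
proof -
  obtain x1 x2 y1 y2 where xy: "x = (x1,x2)" "y = (y1,y2)" by fastforce
  note hx = affine_sq_minus_id_twice[OF x[unfolded xy(1)] assms(3)[unfolded xy(1)]]
  note hy = affine_sq_minus_id_twice[OF y[unfolded xy(2)] assms(4)[unfolded xy(2)]]
  have pr: "Factorial_Ring.prime (int p)" using p by simp
  have "\<not> int p dvd 2" using p by (auto simp: zdvd_not_zless dest: prime_gt_1_nat)
  moreover have "int p dvd 2 * (int x1 - int y1)" "int p dvd 2 * (int x2 - int y2)"
    using dvd_diff[OF hx(1) hy(1)] dvd_diff[OF hx(2) hy(2)] by (simp_all add: algebra_simps)
  ultimately have "int p dvd int x1 - int y1" "int p dvd int x2 - int y2"
    using pr prime_dvd_mult_iff by blast+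
  then show ?thesis using x y xy by (auto simp: Fp2_iff residue_eq_iff)
qed

lemma cycle_type_affine_sq_minus_id:
  "cycle_type (Fp2 p) (affine p (a,b,c,d) (v1,v2)) = {#1#} + replicate_mset ((p^2 - 1) div 4) 4"
proof -
  have p0: "p > 0" using p prime_gt_0_nat by blast
  have "p^2 mod 4 = 1" using p(2) power_mod[of p 4 2] by simp
  then have card: "card (Fp2 p) mod 4 = 1" by (simp only: card_Fp2)
  have maps: "affine p (a,b,c,d) (v1,v2) x \<in> Fp2 p" if "x \<in> Fp2 p" for x
    using affine_in_Fp2[OF p0 that] .
  show ?thesis
    using cycle_type_period4[of "Fp2 p" "affine p (a,b,c,d) (v1,v2)", OF maps
        affine_sq_minus_id_period4 affine_sq_minus_id_involutive_unique finite_Fp2 card]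
    unfolding card_Fp2 .
qed

end

section \<open>Quaternion subgroups of SL(2,p)\<close>

lemma Q8_pow4: "x \<in> carrier Q8 \<Longrightarrow> q8mult (q8mult x x) (q8mult x x) = (False, 0)"
  by (cases x) (auto simp: Q8_def q8mult_def qtab_def less_Suc_eq numeral_eq_Suc)

lemma Q8_idempotent: "e \<in> carrier Q8 \<Longrightarrow> q8mult e e = e \<Longrightarrow> e = (False, 0)"
  by (cases e) (auto simp: Q8_def q8mult_def qtab_def less_Suc_eq numeral_eq_Suc)

lemma card_Q8: "card (carrier Q8) = 8"
  by (simp add: Q8_def card_cartesian_product)

lemma (in group) iso_Q8_pow4:
  assumes "G \<cong> Q8" and h: "h \<in> carrier G"
  shows "(h \<otimes> h) \<otimes> (h \<otimes> h) = \<one>"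
proof -
  obtain \<phi> where \<phi>: "\<phi> \<in> iso G Q8" using assms(1) unfolding is_iso_def by blast
  then have hom: "\<And>x y. x \<in> carrier G \<Longrightarrow> y \<in> carrier G \<Longrightarrow> \<phi> (x \<otimes> y) = q8mult (\<phi> x) (\<phi> y)"
    and into: "\<And>x. x \<in> carrier G \<Longrightarrow> \<phi> x \<in> carrier Q8"
    and inj: "inj_on \<phi> (carrier G)"
    unfolding iso_def hom_def bij_betw_def by (auto simp: Q8_def)
  \<comment> \<open>Q8 is not known to be a group here, so the image of the unit is located by idempotency\<close>
  have "\<phi> \<one> = (False, 0)" using hom[of \<one> \<one>] into[of \<one>] by (intro Q8_idempotent) simp_all
  moreover have "\<phi> ((h \<otimes> h) \<otimes> (h \<otimes> h)) = q8mult (q8mult (\<phi> h) (\<phi> h)) (q8mult (\<phi> h) (\<phi> h))"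
    using h by (simp add: hom)
  then have "\<phi> ((h \<otimes> h) \<otimes> (h \<otimes> h)) = (False, 0)" using Q8_pow4[OF into[OF h]] by simp
  ultimately show ?thesis using h by (intro inj_onD[OF inj]) simp_all
qed

context
  fixes p :: nat and Q :: "mat2 set"
  assumes p: "Factorial_Ring.prime p" "p mod 4 = 3"
    and Q: "subgroup Q (SL2_group p)" "(SL2_group p)\<lparr>carrier := Q\<rparr> \<cong> Q8"
begin

lemma Q8_subgroup_SL2_cases:
  assumes h: "h \<in> Q" shows "h = (1,0,0,1) \<or> h = minus_id p \<or> mmul p h h = minus_id p"
proof -
  have p2: "p > 2" using prime_3_mod_4_gt_2[OF p] .
  interpret SL2: group "SL2_group p" using group_SL2_group p2 by simp
  interpret Qgrp: group "(SL2_group p)\<lparr>carrier := Q\<rparr>" using subgroup.subgroup_is_group[OF Q(1)] SL2.group_axioms .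
  have QS: "Q \<subseteq> SL2 p" using subgroup.subset[OF Q(1)] by (simp add: SL2_group_def)
  have closed: "mmul p x y \<in> Q" if "x \<in> Q" "y \<in> Q" for x y
    using subgroup.m_closed[OF Q(1)] that by (simp add: SL2_group_def)
  \<comment> \<open>both h and h^2 square to 1, and the only involutions of SL(2,p) are \<plusminus>1\<close>
  have "mmul p (mmul p h h) (mmul p h h) = (1,0,0,1)"
    using Qgrp.iso_Q8_pow4[OF Q(2)] h by (simp add: SL2_group_def)
  moreover have involution: "x = (1,0,0,1) \<or> x = minus_id p"
    if "x \<in> Q" "mmul p x x = (1,0,0,1)" for x
  proof -
    obtain a b c d where "x = (a,b,c,d)" by (cases x) auto
    then show ?thesis using SL2_sq_eq_id[OF p(1) p2] that QS by blast
  qed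
  ultimately have "mmul p h h = (1,0,0,1) \<or> mmul p h h = minus_id p"
    using closed[OF h h] by blast
  then show ?thesis using involution[OF h] by blast
qed

lemma order4_sq_eq_minus_id:
  assumes g: "g \<in> Q" "group.ord (SL2_group p) g = 4"
  shows "mmul p g g = minus_id p"
proof -
  have p2: "p > 2" using prime_3_mod_4_gt_2[OF p] .
  interpret SL2: group "SL2_group p" using group_SL2_group p2 by simp
  have gS: "g \<in> carrier (SL2_group p)" using subgroup.subset[OF Q(1)] g(1) by blast
  have "g \<noteq> \<one>\<^bsub>SL2_group p\<^esub>" using g(2) by auto
  moreover have "g \<noteq> minus_id p"
  proof
    assume "g = minus_id p"
    have "g [^]\<^bsub>SL2_group p\<^esub> (2::nat) = g \<otimes>\<^bsub>SL2_group p\<^esub> g"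
      using SL2.l_one[OF gS] by (simp add: numeral_2_eq_2)
    also have "\<dots> = \<one>\<^bsub>SL2_group p\<^esub>"
      using minus_id_sq p2 \<open>g = minus_id p\<close> by (simp add: SL2_group_def)
    finally have "g [^]\<^bsub>SL2_group p\<^esub> (2::nat) = \<one>\<^bsub>SL2_group p\<^esub>" .
    then show False using SL2.pow_eq_id[OF gS] g(2) by simp
  qed
  ultimately show ?thesis using Q8_subgroup_SL2_cases[OF g(1)] by (auto simp: SL2_group_def)
qed

lemma generate_order4_elements:
  assumes "g \<in> Q" "group.ord (SL2_group p) g = 4"
  shows "{(1,0,0,1), g, minus_id p} \<subseteq> generate (SL2_group p) {g}"
proof -
  have gC: "g \<in> generate (SL2_group p) {g}" by (rule generate.incl) simp
  then show ?thesis
    using generate.one[of "SL2_group p" "{g}"] generate.eng[OF gC gC] order4_sq_eq_minus_id[OF assms]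
    by (simp add: SL2_group_def)
qed

end

lemma spectrum_perm_affine_group_Q8_cyclic:
  assumes p: "Factorial_Ring.prime p" "p mod 4 = 3"
    and Q: "subgroup Q (SL2_group p)" "(SL2_group p)\<lparr>carrier := Q\<rparr> \<cong> Q8"
    and g: "g \<in> Q" "group.ord (SL2_group p) g = 4"
  shows "spectrum_perm (Fp2 p) (affine_group p Q)
    = spectrum_perm (Fp2 p) (affine_group p (generate (SL2_group p) {g}))"
proof -
  let ?C = "generate (SL2_group p) {g}" and ?ct = "cycle_type (Fp2 p)"
  have p2: "p > 2" using prime_3_mod_4_gt_2[OF p] .
  interpret SL2: group "SL2_group p" using group_SL2_group p2 by simp
  have g_sq: "mmul p g g = minus_id p" using order4_sq_eq_minus_id[OF p Q g] .
  have gC: "g \<in> ?C" and pm_one: "(1,0,0,1) \<in> ?C" "minus_id p \<in> ?C"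
    using generate_order4_elements[OF p Q g] by simp_all
  have "?C \<subseteq> Q" using g(1) by (intro SL2.generate_subgroup_incl Q(1)) simp
  then have "?ct ` affine_group p ?C \<subseteq> ?ct ` affine_group p Q"
    using affine_group_mono by blast
  moreover have "?ct f \<in> ?ct ` affine_group p ?C" if f: "f \<in> affine_group p Q" for f
  proof -
    obtain M v where f: "f = affine p M v" "M \<in> Q" "v \<in> Fp2 p"
      using f by (rule affine_groupE)
    consider "M = (1,0,0,1) \<or> M = minus_id p" | "mmul p M M = minus_id p"
      using Q8_subgroup_SL2_cases[OF p Q f(2)] by blast
    then show ?thesis
    proof cases
      case 1
      then have "f \<in> affine_group p ?C" using f pm_one by (auto intro: affine_groupI)
      then show ?thesis by blast
    next
      \<comment> \<open>every such f has the cycle type of the linear map g\<close>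
      case 2
      obtain a b c d a' b' c' d' v1 v2 where "M = (a,b,c,d)" "g = (a',b',c',d')" "v = (v1,v2)"
        by (metis prod_cases4 surj_pair)
      then have "?ct f = ?ct (affine p g (0,0))"
        using cycle_type_affine_sq_minus_id[OF p] 2 g_sq f(1) by simp
      moreover have "affine p g (0,0) \<in> affine_group p ?C"
        using gC p2 by (simp add: affine_groupI Fp2_def)
      ultimately show ?thesis by blast
    qed
  qed
  ultimately show ?thesis unfolding spectrum_perm_def by blast
qed

theorem mainTheorem13:
  fixes p :: nat and Q :: "mat2 set" and g :: mat2
  assumes "Factorial_Ring.prime p" and "p mod 4 = 3"
    and "subgroup Q (SL2_group p)"
    and "(SL2_group p)\<lparr>carrier := Q\<rparr> \<cong> Q8"
    and "g \<in> Q" and "group.ord (SL2_group p) g = 4"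
  shows "card (Fp2 p) = p ^ 2
    \<and> subgroup (affine_group p Q) (BijGroup (Fp2 p))
    \<and> subgroup (affine_group p (generate (SL2_group p) {g})) (BijGroup (Fp2 p))
    \<and> primitive (Fp2 p) (affine_group p Q)
    \<and> primitive (Fp2 p) (affine_group p (generate (SL2_group p) {g}))
    \<and> \<not> (perm_group (Fp2 p) (affine_group p Q)
           \<cong> perm_group (Fp2 p) (affine_group p (generate (SL2_group p) {g})))
    \<and> spectrum_perm (Fp2 p) (affine_group p Q)
        = spectrum_perm (Fp2 p) (affine_group p (generate (SL2_group p) {g}))"
proof -
  note p = assms(1,2) and Q = assms(3,4) and g = assms(5,6)
  let ?C = "generate (SL2_group p) {g}"
  have p1: "p > 1" using prime_gt_1_nat[OF p(1)] .
  interpret SL2: group "SL2_group p" using group_SL2_group[OF p1] .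
  have gS: "g \<in> SL2 p" using subgroup.subset[OF Q(1)] g(1) by (auto simp: SL2_group_def)
  have C: "subgroup ?C (SL2_group p)" using gS by (intro SL2.generate_is_subgroup) (simp add: SL2_group_def)
  have gC: "g \<in> ?C" and one: "(1,0,0,1) \<in> Q" "(1,0,0,1) \<in> ?C"
    using generate_order4_elements[OF p Q g] subgroup.one_closed[OF Q(1)] by (simp_all add: SL2_group_def)
  have g_sq: "mmul p g g = minus_id p" using order4_sq_eq_minus_id[OF p Q g] .
  have "card (affine_group p Q) = 8 * p^2"
    using card_affine_group[OF p1] subgroup.subset[OF Q(1)] iso_same_card[OF Q(2)] card_Q8
    by (simp add: SL2_group_def)
  moreover have "card (affine_group p ?C) = 4 * p^2"
    using card_affine_group[OF p1] subgroup.subset[OF C] SL2.generate_pow_card[of g] gS g(2)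
    by (simp add: SL2_group_def)
  ultimately have "\<not> perm_group (Fp2 p) (affine_group p Q) \<cong> perm_group (Fp2 p) (affine_group p ?C)"
    using iso_same_card p1 by (fastforce simp: perm_group_def)
  then show ?thesis
    using card_Fp2 affine_group_subgroup[OF p1 Q(1)] affine_group_subgroup[OF p1 C]
      primitive_affine_group[OF p one(1) g(1) g_sq] primitive_affine_group[OF p one(2) gC g_sq]
      spectrum_perm_affine_group_Q8_cyclic[OF p Q g]
    by blast
qed

end
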